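(* If $X$ is a topological quandle with the indiscrete topology, then $\bar H^W_n(X)\cong H^W_{n+1}(X)$ for every $n\ge0$ and $W\in\{R,D,Q\}$.
   Context: A quandle is a set with a binary operation $\triangleright$ such that $x\triangleright x=x$, each $\beta_y(x)=x\triangleright y$ is bijective, and $(x\triangleright y)\triangleright z=(x\triangleright z)\triangleright(y\triangleright z)$. A topological quandle is a topological space with a continuous quandle operation such that every $\beta_y$ is a homeomorphism. For a topological quandle $X$, $\bar C^R_n(X)$ is the free abelian group on singular $n$-simplices $\sigma:\Delta^n\to X$ modulo identifying two simplices with the same ordered vertex tuple; thus it is free abelian on the tuples $\sigma_{[x_1,\dots,x_{n+1}]}$ ($x_i=\sigma(e_{i-1})$) that are vertex tuples of some singular $n$-simplex. Its boundary is $\partial_n\sigma_{[x_1,\dots,x_{n+1}]}=\sum_{i=2}^{n+1}(-1)^i\big(\sigma_{[x_1,\dots,\hat{x_i},\dots,x_{n+1}]}-\sigma_{[x_1\triangleright x_i,\dots,x_{i-1}\triangleright x_i,x_{i+1},\dots,x_{n+1}]}\big)$. For $n\ge1$, $\bar C^D_n(X)$ is the subgroup generated by $\sigma_{[x_1,\dots,x_{n+1}]}$ with $x_i=x_{i+1}$ for some $i\in\{1,\dots,n\}$, and $\bar C^D_0(X)=0$; it is a subcomplex, and $\bar C^Q_n(X)=\bar C^R_n(X)/\bar C^D_n(X)$ with the induced boundary. $\bar H^W_n(X)$ denotes the homology of $\bar C^W_*(X)$. The rack complex $C^R_n(X)$ is free abelian on $X^n$ with boundary $\partial^R_n(x_1,\dots,x_n)=\sum_{i=2}^n(-1)^i[(x_1,\dots,\hat{x_i},\dots,x_n)-(x_1\triangleright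 x_i,\dots,x_{i-1}\triangleright x_i,x_{i+1},\dots,x_n)]$; $C^D_n(X)\subset C^R_n(X)$ is generated by tuples with $x_i=x_{i+1}$ for some $i\in\{1,\dots,n-1\}$; $C^Q_n(X)=C^R_n(X)/C^D_n(X)$; $H^W_n(X)$ ($W=R,D,Q$) are the homologies of these complexes (rack, degenerate and quandle homology of the underlying quandle). *)

theory Defs
  imports "HOL-Homology.Homology"
begin

definition quandle :: "'a set \<Rightarrow> ('a \<Rightarrow> 'a \<Rightarrow> 'a) \<Rightarrow> bool" where
  "quandle Q op \<longleftrightarrow>
     (\<forall>x\<in>Q. \<forall>y\<in>Q. op x y \<in> Q) \<and>
     (\<forall>x\<in>Q. op x x = x) \<and>
     (\<forall>y\<in>Q. bij_betw (\<lambda>x. op x y) Q Q) \<and>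
     (\<forall>x\<in>Q. \<forall>y\<in>Q. \<forall>z\<in>Q. op (op x y) z = op (op x z) (op y z))"

definition topological_quandle :: "'a topology \<Rightarrow> ('a \<Rightarrow> 'a \<Rightarrow> 'a) \<Rightarrow> bool" where
  "topological_quandle T op \<longleftrightarrow>
     quandle (topspace T) op \<and>
     continuous_map (prod_topology T T) T (\<lambda>(x, y). op x y) \<and>
     (\<forall>y\<in>topspace T. homeomorphic_map T T (\<lambda>x. op x y))"

definition indiscrete :: "'a topology \<Rightarrow> bool" where
  "indiscrete T \<longleftrightarrow> (\<forall>U. openin T U \<longleftrightarrow> U = {} \<or> U = topspace T)"

text \<open>Tuples are lists; list index i (0-based) is the paper's index i+1.\<close>

definition face_del :: "nat \<Rightarrow> 'a list \<Rightarrow> 'a list" where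
  "face_del i xs = take i xs @ drop (Suc i) xs"

definition face_act :: "('a \<Rightarrow> 'a \<Rightarrow> 'a) \<Rightarrow> nat \<Rightarrow> 'a list \<Rightarrow> 'a list" where
  "face_act op i xs = map (\<lambda>y. op y (xs ! i)) (take i xs) @ drop (Suc i) xs"

definition bd_gen :: "('a \<Rightarrow> 'a \<Rightarrow> 'a) \<Rightarrow> 'a list \<Rightarrow> ('a list \<Rightarrow>\<^sub>0 int)" where
  "bd_gen op xs = (\<Sum>i\<in>{1..<length xs}.
      frag_cmul ((-1) ^ Suc i) (frag_of (face_del i xs) - frag_of (face_act op i xs)))"

definition bd :: "('a \<Rightarrow> 'a \<Rightarrow> 'a) \<Rightarrow> ('a list \<Rightarrow>\<^sub>0 int) \<Rightarrow> ('a list \<Rightarrow>\<^sub>0 int)" where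
  "bd op = frag_extend (bd_gen op)"

definition rack_gens :: "'a set \<Rightarrow> nat \<Rightarrow> 'a list set" where
  "rack_gens Q n = {xs. length xs = n \<and> set xs \<subseteq> Q}"

definition bar_gens :: "'a topology \<Rightarrow> nat \<Rightarrow> 'a list set" where
  "bar_gens T n = {map (\<lambda>i. simplicial_vertex i \<sigma>) [0..<Suc n] | \<sigma>. singular_simplex n T \<sigma>}"

definition degen :: "'a list \<Rightarrow> bool" where
  "degen xs \<longleftrightarrow> (\<exists>i. Suc i < length xs \<and> xs ! i = xs ! Suc i)"

definition degen_gens :: "(nat \<Rightarrow> 'a list set) \<Rightarrow> nat \<Rightarrow> 'a list set" where
  "degen_gens gens n = {xs \<in> gens n. degen xs}"

text \<open>G n is the degree-n chain group, d m : G (Suc m) \<rightarrow> G m the boundary.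
  Degree-0 cycles are all of G 0.\<close>
definition chain_homology ::
  "(nat \<Rightarrow> ('b, 'm) monoid_scheme) \<Rightarrow> (nat \<Rightarrow> 'b \<Rightarrow> 'b) \<Rightarrow> nat \<Rightarrow> 'b set monoid" where
  "chain_homology G d n =
     subgroup_generated (G n)
       (if n = 0 then carrier (G 0) else kernel (G n) (G (n - 1)) (d (n - 1)))
     Mod (d n ` carrier (G (Suc n)))"

definition homR :: "(nat \<Rightarrow> 'a list set) \<Rightarrow> ('a \<Rightarrow> 'a \<Rightarrow> 'a) \<Rightarrow> nat \<Rightarrow> ('a list \<Rightarrow>\<^sub>0 int) set monoid" where
  "homR gens op n = chain_homology (\<lambda>m. free_Abelian_group (gens m)) (\<lambda>m. bd op) n"

definition homD :: "(nat \<Rightarrow> 'a list set) \<Rightarrow> ('a \<Rightarrow> 'a \<Rightarrow> 'a) \<Rightarrow> nat \<Rightarrow> ('a list \<Rightarrow>\<^sub>0 int) set monoid" where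
  "homD gens op n = chain_homology (\<lambda>m. free_Abelian_group (degen_gens gens m)) (\<lambda>m. bd op) n"

text \<open>Quotient complex C/D: groups C_n Mod D_n, with the induced boundary on cosets.\<close>
definition quot_group :: "(nat \<Rightarrow> 'a list set) \<Rightarrow> nat \<Rightarrow> ('a list \<Rightarrow>\<^sub>0 int) set monoid" where
  "quot_group gens m = free_Abelian_group (gens m) Mod carrier (free_Abelian_group (degen_gens gens m))"

definition quot_bd :: "(nat \<Rightarrow> 'a list set) \<Rightarrow> ('a \<Rightarrow> 'a \<Rightarrow> 'a) \<Rightarrow> nat
    \<Rightarrow> ('a list \<Rightarrow>\<^sub>0 int) set \<Rightarrow> ('a list \<Rightarrow>\<^sub>0 int) set" where
  "quot_bd gens op m A = the_elem ((\<lambda>c. carrier (free_Abelian_group (degen_gens gens m))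
       #>\<^bsub>free_Abelian_group (gens m)\<^esub> bd op c) ` A)"

definition homQ :: "(nat \<Rightarrow> 'a list set) \<Rightarrow> ('a \<Rightarrow> 'a \<Rightarrow> 'a) \<Rightarrow> nat \<Rightarrow> ('a list \<Rightarrow>\<^sub>0 int) set set monoid" where
  "homQ gens op n = chain_homology (quot_group gens) (quot_bd gens op) n"

end

theory Submission
  imports Defs
begin

text \<open>In the indiscrete topology every map into \<open>X\<close> is continuous, so every tuple of
  points is the vertex tuple of a singular simplex: the generators of the bar complexes in degree
  \<open>n\<close> are exactly the \<open>(n+1)\<close>-tuples, and each bar complex is the corresponding rack,
  degenerate or quandle complex shifted down by one degree. The shift is harmless at the bottom:
  all degree-0 chains of the bar complex are cycles by convention, and all degree-1 chains of the
  rack complexes are cycles because the boundary of a 1-tuple is an empty sum.\<close>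

lemma continuous_map_into_indiscrete:
  assumes "indiscrete T"
  shows "continuous_map X T f \<longleftrightarrow> f \<in> topspace X \<rightarrow> topspace T"
proof
  assume "continuous_map X T f"
  then show "f \<in> topspace X \<rightarrow> topspace T"
    by (rule continuous_map_funspace)
next
  assume f: "f \<in> topspace X \<rightarrow> topspace T"
  have "openin X {x \<in> topspace X. f x \<in> U}" if "openin T U" for U
  proof -
    from that assms have "U = {} \<or> U = topspace T"
      unfolding indiscrete_def by blast
    with f have "{x \<in> topspace X. f x \<in> U} = {} \<or> {x \<in> topspace X. f x \<in> U} = topspace X"
      by blast
    then show ?thesis
      by (metis openin_empty openin_topspace)
  qed
  with f show "continuous_map X T f"
    unfolding continuous_map_def by blast
qed

lemma simplicial_vertex_in_topspace:
  assumes "singular_simplex n T \<sigma>" and "i \<le> n"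
  shows "simplicial_vertex i \<sigma> \<in> topspace T"
proof -
  have "\<sigma> \<in> standard_simplex n \<rightarrow> topspace T"
    using assms(1) continuous_map_funspace unfolding singular_simplex_def by fastforce
  then show ?thesis
    using assms(2) unfolding simplicial_vertex_def by auto
qed

lemma bar_gens_subset_rack_gens: "bar_gens T n \<subseteq> rack_gens (topspace T) (Suc n)"
  by (auto simp: bar_gens_def rack_gens_def simplicial_vertex_in_topspace)

lemma Least_basis_nonzero: "(LEAST j :: nat. (if j = i then 1 else 0 :: real) \<noteq> 0) = i"
  by (rule Least_equality) (auto split: if_splits)

lemma singular_simplex_with_vertices_indiscrete:
  assumes "indiscrete T" and "length xs = Suc n" and "set xs \<subseteq> topspace T"
  shows "\<exists>\<sigma>. singular_simplex n T \<sigma> \<and> map (\<lambda>i. simplicial_vertex i \<sigma>) [0..<Suc n] = xs"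
proof -
  define \<sigma> where
    "\<sigma> = restrict (\<lambda>x. xs ! min n (LEAST i. x i \<noteq> 0)) (standard_simplex n)"
  have "\<sigma> \<in> standard_simplex n \<rightarrow> topspace T"
    using assms(2,3) by (auto simp: \<sigma>_def)
  then have "singular_simplex n T \<sigma>"
    unfolding singular_simplex_def continuous_map_into_indiscrete[OF assms(1)]
    by (simp add: \<sigma>_def)
  moreover have "simplicial_vertex i \<sigma> = xs ! i" if "i < Suc n" for i
    using that by (simp add: \<sigma>_def simplicial_vertex_def Least_basis_nonzero)
  then have "map (\<lambda>i. simplicial_vertex i \<sigma>) [0..<Suc n] = xs"
    using assms(2) by (auto intro!: nth_equalityI simp del: upt_Suc)
  ultimately show ?thesis by blast
qed

lemma bar_gens_indiscrete:
  assumes "indiscrete T"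
  shows "bar_gens T n = rack_gens (topspace T) (Suc n)"
proof
  show "rack_gens (topspace T) (Suc n) \<subseteq> bar_gens T n"
    using singular_simplex_with_vertices_indiscrete[OF assms]
    unfolding rack_gens_def bar_gens_def by fastforce
qed (rule bar_gens_subset_rack_gens)

lemma chain_homology_shift:
  assumes "kernel (G (Suc 0)) (G 0) (d 0) = carrier (G (Suc 0))"
  shows "chain_homology (\<lambda>m. G (Suc m)) (\<lambda>m. d (Suc m)) n = chain_homology G d (Suc n)"
  using assms by (cases n) (simp_all add: chain_homology_def)

lemma bd_vanishes_on_1_tuples:
  assumes "S \<subseteq> {xs. length xs = 1}" and "c \<in> carrier (free_Abelian_group S)"
  shows "bd op c = 0"
  unfolding bd_def
proof (rule frag_extend_eq_0)
  show "bd_gen op xs = 0" if "xs \<in> Poly_Mapping.keys c" for xs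
    using that assms by (auto simp: bd_gen_def free_Abelian_group_def)
qed

lemma kernel_bd_if_bd_vanishes:
  assumes "\<And>c. c \<in> carrier (free_Abelian_group S) \<Longrightarrow> bd op c = 0"
  shows "kernel (free_Abelian_group S) (free_Abelian_group S') (bd op) = carrier (free_Abelian_group S)"
  using assms by (auto simp: kernel_def free_Abelian_group_def)

lemma quot_bd_eq_one_if_bd_vanishes:
  assumes "\<And>c. c \<in> carrier (free_Abelian_group (gens (Suc m))) \<Longrightarrow> bd op c = 0"
    and "A \<in> carrier (quot_group gens (Suc m))"
  shows "quot_bd gens op m A = \<one>\<^bsub>quot_group gens m\<^esub>"
proof -
  let ?F = "free_Abelian_group (gens (Suc m))"
  let ?F' = "free_Abelian_group (gens m)"
  let ?H = "carrier (free_Abelian_group (degen_gens gens (Suc m)))"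
  let ?H' = "carrier (free_Abelian_group (degen_gens gens m))"
  obtain a where a: "a \<in> carrier ?F" and A: "A = ?H #>\<^bsub>?F\<^esub> a"
    using assms(2) unfolding quot_group_def FactGroup_def RCOSETS_def by auto
  have "0 \<in> ?H" and "a = 0 \<otimes>\<^bsub>?F\<^esub> a"
    by (simp_all add: free_Abelian_group_def)
  then have "a \<in> A"
    unfolding A r_coset_def by blast
  have "?H \<subseteq> carrier ?F"
    by (auto simp: free_Abelian_group_def degen_gens_def)
  then have "A \<subseteq> carrier ?F"
    unfolding A
    by (rule monoid.r_coset_subset_G[OF group.is_monoid[OF group_free_Abelian_group] _ a])
  moreover have "?H' #>\<^bsub>?F'\<^esub> 0 = ?H'"
    by (simp add: r_coset_def free_Abelian_group_def)
  ultimately have "?H' #>\<^bsub>?F'\<^esub> bd op c = ?H'" if "c \<in> A" for c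
    using assms(1) that by (metis subsetD)
  with \<open>a \<in> A\<close> have "(\<lambda>c. ?H' #>\<^bsub>?F'\<^esub> bd op c) ` A = {?H'}"
    by blast
  then show ?thesis
    by (simp add: quot_bd_def quot_group_def FactGroup_def)
qed

lemma kernel_quot_bd_if_bd_vanishes:
  assumes "\<And>c. c \<in> carrier (free_Abelian_group (gens (Suc m))) \<Longrightarrow> bd op c = 0"
  shows "kernel (quot_group gens (Suc m)) (quot_group gens m) (quot_bd gens op m)
           = carrier (quot_group gens (Suc m))"
  using quot_bd_eq_one_if_bd_vanishes[OF assms] unfolding kernel_def by blast

lemma degen_gens_shift: "degen_gens (\<lambda>m. gens (Suc m)) m = degen_gens gens (Suc m)"
  by (simp add: degen_gens_def)

lemma homR_shift: "homR (\<lambda>m. rack_gens Q (Suc m)) op n = homR (rack_gens Q) op (Suc n)"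
  unfolding homR_def
  by (rule chain_homology_shift, rule kernel_bd_if_bd_vanishes, rule bd_vanishes_on_1_tuples)
     (auto simp: rack_gens_def)

lemma homD_shift: "homD (\<lambda>m. rack_gens Q (Suc m)) op n = homD (rack_gens Q) op (Suc n)"
  unfolding homD_def degen_gens_shift
  by (rule chain_homology_shift, rule kernel_bd_if_bd_vanishes, rule bd_vanishes_on_1_tuples)
     (auto simp: degen_gens_def rack_gens_def)

lemma homQ_shift: "homQ (\<lambda>m. rack_gens Q (Suc m)) op n = homQ (rack_gens Q) op (Suc n)"
proof -
  have quot_shift:
    "quot_group (\<lambda>m. rack_gens Q (Suc m)) = (\<lambda>m. quot_group (rack_gens Q) (Suc m))"
    "quot_bd (\<lambda>m. rack_gens Q (Suc m)) op = (\<lambda>m. quot_bd (rack_gens Q) op (Suc m))"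
    by (simp_all add: fun_eq_iff quot_group_def quot_bd_def degen_gens_shift)
  have "kernel (quot_group (rack_gens Q) (Suc 0)) (quot_group (rack_gens Q) 0)
            (quot_bd (rack_gens Q) op 0)
          = carrier (quot_group (rack_gens Q) (Suc 0))"
    by (rule kernel_quot_bd_if_bd_vanishes, rule bd_vanishes_on_1_tuples) (auto simp: rack_gens_def)
  then show ?thesis
    unfolding homQ_def quot_shift by (rule chain_homology_shift)
qed

theorem mainTheorem10:
  fixes T :: "'a topology" and op :: "'a \<Rightarrow> 'a \<Rightarrow> 'a"
  assumes "topological_quandle T op" and "indiscrete T"
  shows "\<forall>n. homR (bar_gens T) op n \<cong> homR (rack_gens (topspace T)) op (Suc n)
           \<and> homD (bar_gens T) op n \<cong> homD (rack_gens (topspace T)) op (Suc n)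
           \<and> homQ (bar_gens T) op n \<cong> homQ (rack_gens (topspace T)) op (Suc n)"
proof -
  have "bar_gens T = (\<lambda>m. rack_gens (topspace T) (Suc m))"
    using bar_gens_indiscrete[OF assms(2)] by blast
  then show ?thesis
    by (simp add: homR_shift homD_shift homQ_shift)
qed

end
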